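(* Let $X,Y$ be non-empty subsets of $A^+$. (i) $XY$ and $YX$ are both prefix (resp. maximal prefix) alt-induced codes if and only if $X$ and $Y$ are prefix (resp. maximal prefix) codes. (ii) $XY$ and $YX$ are both suffix (resp. maximal suffix) alt-induced codes if and only if $X$ and $Y$ are suffix (resp. maximal suffix) codes. (iii) $XY$ and $YX$ are both bifix (resp. thin maximal bifix) alt-induced codes if and only if $X$ and $Y$ are bifix (resp. thin maximal bifix) codes.
   Context: $A$ is a finite alphabet, $A^*$ the set of words, $A^+$ the non-empty words, $XY=\{xy:x\in X,y\in Y\}$. A code is a subset of $A^+$ in which every word has at most one factorization into its elements. A prefix (suffix) code is a subset of $A^+$ in which no word is a proper prefix (suffix) of another; a bifix code is both; such a code is maximal if not properly contained in another prefix (suffix, bifix) code over $A$. A set is thin if some word of $A^*$ is not a factor of any of its words. For non-empty $X,Y\subseteq A^+$, $(X,Y)$ is an alternative code if no word of $A^+$ admits two different similar alternative factorizations on $(X,Y)$ (factorizations $u_1\cdots u_n$, $n\ge2$, $u_i\in X\cup Y$, alternating between $X$ and $Y$; similar = beginning in the same set and ending in the same set); equivalently, $XY$ is a code and each element of $XY$ has exactly one factorization $xy$ with $x\in X,y\in Y$. An alt-induced code is a set $Z$ with $Z=UV$ for some alternative code $(U,V)$; a prefix (suffix, bifix, maximal prefix, etc.) alt-induced code is an alt-induced code which is also a prefix (suffix, bifix, maximal prefix, etc.) code. *)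

theory Defs
  imports Main "HOL-Library.Sublist"
begin

text \<open>Words over the finite alphabet A are lists over a finite type 'a (A = UNIV).
A^+ is the set of non-empty lists.\<close>

definition plus_words :: "'a list set" where
  "plus_words = {w. w \<noteq> []}"

definition conc :: "'a list set \<Rightarrow> 'a list set \<Rightarrow> 'a list set" where
  "conc X Y = {x @ y | x y. x \<in> X \<and> y \<in> Y}"

definition is_code :: "'a list set \<Rightarrow> bool" where
  "is_code X \<longleftrightarrow> X \<subseteq> plus_words \<and>
     (\<forall>us vs. set us \<subseteq> X \<and> set vs \<subseteq> X \<and> concat us = concat vs \<longrightarrow> us = vs)"

definition prefix_code :: "'a list set \<Rightarrow> bool" where
  "prefix_code X \<longleftrightarrow> X \<subseteq> plus_words \<and> (\<forall>u\<in>X. \<forall>v\<in>X. \<not> strict_prefix u v)"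

definition suffix_code :: "'a list set \<Rightarrow> bool" where
  "suffix_code X \<longleftrightarrow> X \<subseteq> plus_words \<and> (\<forall>u\<in>X. \<forall>v\<in>X. \<not> strict_suffix u v)"

definition bifix_code :: "'a list set \<Rightarrow> bool" where
  "bifix_code X \<longleftrightarrow> prefix_code X \<and> suffix_code X"

definition maximal_prefix_code :: "'a list set \<Rightarrow> bool" where
  "maximal_prefix_code X \<longleftrightarrow> prefix_code X \<and> (\<forall>Z. prefix_code Z \<and> X \<subseteq> Z \<longrightarrow> Z = X)"

definition maximal_suffix_code :: "'a list set \<Rightarrow> bool" where
  "maximal_suffix_code X \<longleftrightarrow> suffix_code X \<and> (\<forall>Z. suffix_code Z \<and> X \<subseteq> Z \<longrightarrow> Z = X)"

definition maximal_bifix_code :: "'a list set \<Rightarrow> bool" where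
  "maximal_bifix_code X \<longleftrightarrow> bifix_code X \<and> (\<forall>Z. bifix_code Z \<and> X \<subseteq> Z \<longrightarrow> Z = X)"

definition thin :: "'a list set \<Rightarrow> bool" where
  "thin X \<longleftrightarrow> (\<exists>w. \<forall>x\<in>X. \<not> sublist w x)"

text \<open>An alternative factorization on (X,Y) starting in X (s = True) or in Y (s = False):
a list u_1 ... u_n, n \<ge> 2, whose entries alternate between X and Y.\<close>
definition alt_fact :: "'a list set \<Rightarrow> 'a list set \<Rightarrow> bool \<Rightarrow> 'a list list \<Rightarrow> bool" where
  "alt_fact X Y s us \<longleftrightarrow> length us \<ge> 2 \<and>
     (\<forall>i<length us. us ! i \<in> (if (even i \<longleftrightarrow> s) then X else Y))"

text \<open>(X,Y) is an alternative code: X, Y non-empty subsets of A^+, and no word has two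
different similar alternative factorizations (same starting set, same ending set;
given the same start, the same end means the same parity of the length).\<close>
definition alt_code :: "'a list set \<Rightarrow> 'a list set \<Rightarrow> bool" where
  "alt_code X Y \<longleftrightarrow> X \<noteq> {} \<and> Y \<noteq> {} \<and> X \<subseteq> plus_words \<and> Y \<subseteq> plus_words \<and>
     (\<forall>s us vs. alt_fact X Y s us \<and> alt_fact X Y s vs \<and>
        (even (length us) \<longleftrightarrow> even (length vs)) \<and> concat us = concat vs \<longrightarrow> us = vs)"

definition alt_induced :: "'a list set \<Rightarrow> bool" where
  "alt_induced Z \<longleftrightarrow> (\<exists>U V. alt_code U V \<and> Z = conc U V)"

end

theory Submission
  imports Defs "HOL-Library.Cardinality"
begin

text \<open>A product of prefix codes is a prefix code, and an alternating factorization over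
  two prefix codes is decoded greedily from the left, so \<open>(X, Y)\<close> is an alternative code;
  conversely a common left factor can be cancelled, so \<open>Y\<close> is prefix whenever \<open>XY\<close> is.
  Suffix codes reduce to prefix codes by reversing all words. Maximality of a prefix code
  amounts to right completeness (every word is comparable with a codeword), which passes to
  products and to left factors. For bifix codes the crux is that a thin maximal bifix code
  is right complete: a word \<open>u\<close> comparable with no codeword and a factor \<open>w\<close> of no
  codeword force every word containing \<open>w\<close> to end with a codeword; rotating that codeword to
  the front then shows that a proportion at least \<open>1 / |A| ^ |u|\<close> of the words of each
  large length avoid \<open>w\<close>, whereas this proportion tends to \<open>0\<close>.\<close>

lemma mem_conc_iff: "z \<in> conc X Y \<longleftrightarrow> (\<exists>x\<in>X. \<exists>y\<in>Y. z = x @ y)"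
  unfolding conc_def by blast

lemma comparable_prefix_cases:
  "prefix x v \<or> prefix v x \<Longrightarrow> prefix u v \<Longrightarrow> prefix x u \<or> prefix u x"
  using prefix_same_cases prefix_order.trans by blast

lemma prefix_code_eq:
  "prefix_code X \<Longrightarrow> x \<in> X \<Longrightarrow> y \<in> X \<Longrightarrow> prefix x y \<or> prefix y x \<Longrightarrow> x = y"
  unfolding prefix_code_def strict_prefix_def by blast

lemma prefix_code_insert:
  assumes "prefix_code X" "y \<noteq> []" "\<forall>x\<in>X. \<not> prefix x y \<and> \<not> prefix y x"
  shows "prefix_code (insert y X)"
  using assms unfolding prefix_code_def plus_words_def strict_prefix_def by auto

lemma prefix_code_conc:
  assumes X: "prefix_code X" and Y: "prefix_code Y"
  shows "prefix_code (conc X Y)"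
  unfolding prefix_code_def
proof safe
  show "z \<in> plus_words" if "z \<in> conc X Y" for z
    using that X unfolding mem_conc_iff prefix_code_def plus_words_def by auto
  fix u v assume "u \<in> conc X Y" "v \<in> conc X Y" and uv: "strict_prefix u v"
  then obtain x y x' y' where xy: "x \<in> X" "y \<in> Y" "u = x @ y"
    and xy': "x' \<in> X" "y' \<in> Y" "v = x' @ y'"
    unfolding mem_conc_iff by blast
  have "prefix x v" using uv xy(3) prefix_order.trans[of x u v] by simp
  then have "x = x'"
    using prefix_code_eq[OF X xy(1) xy'(1)] prefix_same_cases[of x v x'] xy'(3) by simp
  then have "strict_prefix y y'" using uv xy(3) xy'(3) by (simp add: strict_prefix_def)
  then show False using Y xy(2) xy'(2) unfolding prefix_code_def by blast
qed

lemma prefix_code_conc_right: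
  assumes XY: "prefix_code (conc X Y)" and "X \<noteq> {}" "Y \<subseteq> plus_words"
  shows "prefix_code Y"
  unfolding prefix_code_def
proof (intro conjI ballI assms(3))
  fix u v assume "u \<in> Y" "v \<in> Y"
  obtain x where "x \<in> X" using \<open>X \<noteq> {}\<close> by blast
  with \<open>u \<in> Y\<close> \<open>v \<in> Y\<close> have "x @ u \<in> conc X Y" "x @ v \<in> conc X Y"
    unfolding mem_conc_iff by blast+
  with XY have "\<not> strict_prefix (x @ u) (x @ v)" unfolding prefix_code_def by blast
  then show "\<not> strict_prefix u v" by (simp add: strict_prefix_def)
qed

lemma prefix_code_conc_iff:
  assumes "X \<noteq> {}" "Y \<noteq> {}" "X \<subseteq> plus_words" "Y \<subseteq> plus_words"
  shows "prefix_code (conc X Y) \<and> prefix_code (conc Y X) \<longleftrightarrow> prefix_code X \<and> prefix_code Y"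
  using assms prefix_code_conc[of X Y] prefix_code_conc[of Y X]
    prefix_code_conc_right[of X Y] prefix_code_conc_right[of Y X] by blast

subsection \<open>Right completeness and maximal prefix codes\<close>

definition right_complete :: "'a list set \<Rightarrow> bool" where
  "right_complete X \<longleftrightarrow> (\<forall>u. \<exists>x\<in>X. prefix x u \<or> prefix u x)"

lemma right_complete_conc:
  assumes X: "right_complete X" and Y: "right_complete Y"
  shows "right_complete (conc X Y)"
  unfolding right_complete_def
proof
  fix u
  obtain x where x: "x \<in> X" "prefix x u \<or> prefix u x" using X unfolding right_complete_def by blast
  show "\<exists>z\<in>conc X Y. prefix z u \<or> prefix u z"
  proof (cases "prefix x u")
    case True
    then obtain r where r: "u = x @ r" by (auto simp: prefix_def)
    obtain y where y: "y \<in> Y" "prefix y r \<or> prefix r y"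
      using Y unfolding right_complete_def by blast
    have "x @ y \<in> conc X Y" using x(1) y(1) unfolding mem_conc_iff by blast
    moreover have "prefix (x @ y) u \<or> prefix u (x @ y)" using y(2) r by simp
    ultimately show ?thesis by blast
  next
    case False
    obtain y where "y \<in> Y" using Y unfolding right_complete_def by blast
    with x(1) have "x @ y \<in> conc X Y" unfolding mem_conc_iff by blast
    moreover have "prefix u (x @ y)" using x(2) False by simp
    ultimately show ?thesis by blast
  qed
qed

lemma right_complete_conc_left:
  assumes "right_complete (conc X Y)"
  shows "right_complete X"
  unfolding right_complete_def
proof
  fix u
  obtain z where "z \<in> conc X Y" "prefix z u \<or> prefix u z"
    using assms unfolding right_complete_def by blast
  then obtain x y where "x \<in> X" "prefix (x @ y) u \<or> prefix u (x @ y)"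
    unfolding mem_conc_iff by blast
  then show "\<exists>x\<in>X. prefix x u \<or> prefix u x"
    using comparable_prefix_cases[of u "x @ y" x] prefix_order.trans[of x "x @ y" u] by auto
qed

lemma right_complete_if_maximal_prefix_code:
  assumes "maximal_prefix_code X"
  shows "right_complete X"
  unfolding right_complete_def
proof (rule ccontr)
  assume "\<not> (\<forall>u. \<exists>x\<in>X. prefix x u \<or> prefix u x)"
  then obtain u where u: "\<forall>x\<in>X. \<not> prefix x u \<and> \<not> prefix u x" by blast
  define v where "v = u @ [undefined]"
  have v: "\<forall>x\<in>X. \<not> prefix x v \<and> \<not> prefix v x"
    using u comparable_prefix_cases[of _ v u] unfolding v_def by auto
  have "prefix_code (insert v X)"
    using assms v prefix_code_insert unfolding maximal_prefix_code_def v_def by blast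
  then have "v \<in> X" using assms unfolding maximal_prefix_code_def by blast
  then show False using v by blast
qed

lemma maximal_prefix_code_iff_right_complete:
  "maximal_prefix_code X \<longleftrightarrow> prefix_code X \<and> right_complete X"
proof
  assume X: "prefix_code X \<and> right_complete X"
  have "Z = X" if Z: "prefix_code Z" "X \<subseteq> Z" for Z
  proof -
    have "z \<in> X" if "z \<in> Z" for z
    proof -
      obtain x where "x \<in> X" "prefix x z \<or> prefix z x"
        using X unfolding right_complete_def by blast
      with Z \<open>z \<in> Z\<close> show ?thesis using prefix_code_eq[of Z x z] by auto
    qed
    with Z show ?thesis by blast
  qed
  with X show "maximal_prefix_code X" unfolding maximal_prefix_code_def by blast
qed (use right_complete_if_maximal_prefix_code maximal_prefix_code_def in blast)

lemma maximal_prefix_code_conc_iff: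
  assumes "X \<noteq> {}" "Y \<noteq> {}" "X \<subseteq> plus_words" "Y \<subseteq> plus_words"
  shows "maximal_prefix_code (conc X Y) \<and> maximal_prefix_code (conc Y X)
    \<longleftrightarrow> maximal_prefix_code X \<and> maximal_prefix_code Y"
  using prefix_code_conc_iff[OF assms] right_complete_conc[of X Y] right_complete_conc[of Y X]
    right_complete_conc_left[of X Y] right_complete_conc_left[of Y X]
  unfolding maximal_prefix_code_iff_right_complete by blast

subsection \<open>Alternative codes\<close>

fun alternating :: "'a list set \<Rightarrow> 'a list set \<Rightarrow> bool \<Rightarrow> 'a list list \<Rightarrow> bool" where
  "alternating X Y s [] \<longleftrightarrow> True"
| "alternating X Y s (u # us) \<longleftrightarrow> u \<in> (if s then X else Y) \<and> alternating X Y (\<not> s) us"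

lemma alternating_iff_nth:
  "alternating X Y s us \<longleftrightarrow> (\<forall>i<length us. us ! i \<in> (if (even i \<longleftrightarrow> s) then X else Y))"
  by (induction us arbitrary: s) (simp_all add: All_less_Suc2)

lemma alt_fact_iff_alternating:
  "alt_fact X Y s us \<longleftrightarrow> 2 \<le> length us \<and> alternating X Y s us"
  unfolding alt_fact_def alternating_iff_nth ..

lemma alternating_subset: "alternating X Y s us \<Longrightarrow> set us \<subseteq> X \<union> Y"
  by (induction us arbitrary: s) (auto split: if_splits)

lemma alternating_append:
  "alternating X Y s (us @ vs) \<longleftrightarrow>
     alternating X Y s us \<and> alternating X Y (s \<longleftrightarrow> even (length us)) vs"
  by (induction us arbitrary: s) auto

lemma alternating_rev:
  "alternating X Y s us \<Longrightarrow>
     alternating (rev ` X) (rev ` Y) (s \<longleftrightarrow> odd (length us)) (rev (map rev us))"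
proof (induction us arbitrary: s)
  case (Cons u us)
  have "alternating (rev ` X) (rev ` Y) (\<not> s \<longleftrightarrow> odd (length us)) (rev (map rev us))"
    using Cons.IH[of "\<not> s"] Cons.prems by simp
  moreover have "rev u \<in> (if (\<not> s \<longleftrightarrow> odd (length us)) \<longleftrightarrow> even (length us) then rev ` X else rev ` Y)"
    using Cons.prems by auto
  ultimately show ?case by (simp add: alternating_append)
qed simp

lemma alternating_concat_inj:
  assumes X: "prefix_code X" and Y: "prefix_code Y"
  shows "alternating X Y s us \<Longrightarrow> alternating X Y s vs \<Longrightarrow> concat us = concat vs \<Longrightarrow> us = vs"
proof (induction us arbitrary: s vs)
  case Nil
  have "[] \<notin> X \<union> Y" using X Y unfolding prefix_code_def plus_words_def by blast
  with alternating_subset[OF Nil(2)] have "\<forall>v\<in>set vs. v \<noteq> []" by blast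
  with Nil(3) show ?case by (simp add: concat_eq_Nil_conv)
next
  case (Cons u us)
  have u: "u \<in> (if s then X else Y)" and "u \<noteq> []"
    using Cons.prems(1) X Y unfolding prefix_code_def plus_words_def by (auto split: if_splits)
  then obtain v vs' where vs: "vs = v # vs'" using Cons.prems(3) by (cases vs) auto
  have v: "v \<in> (if s then X else Y)" using Cons.prems(2) vs by simp
  have "u @ concat us = v @ concat vs'" using Cons.prems(3) vs by simp
  then have "prefix u v \<or> prefix v u" using prefix_same_cases[of u _ v] by (metis prefixI)
  then have uv: "u = v" using u v prefix_code_eq[OF X] prefix_code_eq[OF Y] by (auto split: if_splits)
  have "us = vs'"
  proof (rule Cons.IH)
    show "alternating X Y (\<not> s) us" using Cons.prems(1) by simp
    show "alternating X Y (\<not> s) vs'" using Cons.prems(2) vs by simp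
    show "concat us = concat vs'" using Cons.prems(3) vs uv by simp
  qed
  with uv vs show ?case by simp
qed

lemma alt_code_if_prefix_codes:
  assumes "prefix_code X" "prefix_code Y" "X \<noteq> {}" "Y \<noteq> {}"
  shows "alt_code X Y"
  using assms alternating_concat_inj[OF assms(1,2)]
  unfolding alt_code_def alt_fact_iff_alternating prefix_code_def by blast

lemma alt_code_if_alt_code_rev:
  assumes "alt_code (rev ` X) (rev ` Y)"
  shows "alt_code X Y"
  unfolding alt_code_def
proof (intro conjI allI impI)
  show "X \<noteq> {}" "Y \<noteq> {}" "X \<subseteq> plus_words" "Y \<subseteq> plus_words"
    using assms unfolding alt_code_def plus_words_def by auto
  have concat_rev: "concat (rev (map rev zs)) = rev (concat zs)" for zs :: "'a list list"
    by (simp add: rev_concat rev_map)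
  fix s us vs
  \<comment> \<open>The reversed factorizations start in the same set since \<open>us\<close> and \<open>vs\<close> have lengths of
    equal parity.\<close>
  assume "alt_fact X Y s us \<and> alt_fact X Y s vs \<and> (even (length us) \<longleftrightarrow> even (length vs))
    \<and> concat us = concat vs"
  then have "alt_fact (rev ` X) (rev ` Y) (s \<longleftrightarrow> odd (length us)) (rev (map rev us))"
    "alt_fact (rev ` X) (rev ` Y) (s \<longleftrightarrow> odd (length us)) (rev (map rev vs))"
    "even (length (rev (map rev us))) \<longleftrightarrow> even (length (rev (map rev vs)))"
    "concat (rev (map rev us)) = concat (rev (map rev vs))"
    unfolding alt_fact_iff_alternating
    using alternating_rev[of X Y s us] alternating_rev[of X Y s vs]
    by (auto simp: concat_rev)
  then have "rev (map rev us) = rev (map rev vs)"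
    using assms unfolding alt_code_def by blast
  then have "map rev (rev (rev (map rev us))) = map rev (rev (rev (map rev vs)))" by simp
  then show "us = vs" by simp
qed

lemma alt_induced_conc_if_prefix_codes:
  "prefix_code X \<Longrightarrow> prefix_code Y \<Longrightarrow> X \<noteq> {} \<Longrightarrow> Y \<noteq> {} \<Longrightarrow> alt_induced (conc X Y)"
  unfolding alt_induced_def using alt_code_if_prefix_codes by blast

subsection \<open>Suffix codes by reversal\<close>

lemma mem_rev_image_iff: "z \<in> rev ` A \<longleftrightarrow> rev z \<in> A"
  by force

lemma rev_image_rev_image [simp]: "rev ` rev ` A = A"
  by (simp add: image_image)

lemma rev_image_subset_plus_words_iff: "rev ` X \<subseteq> plus_words \<longleftrightarrow> X \<subseteq> plus_words"
  by (auto simp: plus_words_def)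

lemma rev_image_conc: "rev ` conc X Y = conc (rev ` Y) (rev ` X)"
proof (rule set_eqI)
  fix z
  have "z \<in> rev ` conc X Y \<longleftrightarrow> (\<exists>x\<in>X. \<exists>y\<in>Y. z = rev y @ rev x)"
    by (simp add: mem_rev_image_iff mem_conc_iff rev_eq_append_conv)
  also have "\<dots> \<longleftrightarrow> z \<in> conc (rev ` Y) (rev ` X)"
    unfolding mem_conc_iff by blast
  finally show "z \<in> rev ` conc X Y \<longleftrightarrow> z \<in> conc (rev ` Y) (rev ` X)" .
qed

lemma suffix_code_iff_prefix_code_rev: "suffix_code X \<longleftrightarrow> prefix_code (rev ` X)"
  unfolding suffix_code_def prefix_code_def
  by (simp add: rev_image_subset_plus_words_iff strict_suffix_to_prefix)

lemma maximal_suffix_code_iff_prefix_code_rev: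
  "maximal_suffix_code X \<longleftrightarrow> maximal_prefix_code (rev ` X)"
proof -
  have "(\<forall>Z. suffix_code Z \<and> X \<subseteq> Z \<longrightarrow> Z = X) \<longleftrightarrow>
        (\<forall>Z. prefix_code (rev ` Z) \<and> rev ` X \<subseteq> rev ` Z \<longrightarrow> rev ` Z = rev ` X)"
    by (simp add: suffix_code_iff_prefix_code_rev inj_image_subset_iff inj_image_eq_iff)
  also have "\<dots> \<longleftrightarrow> (\<forall>Z. prefix_code Z \<and> rev ` X \<subseteq> Z \<longrightarrow> Z = rev ` X)"
    by (metis rev_image_rev_image)
  finally show ?thesis
    unfolding maximal_suffix_code_def maximal_prefix_code_def
    by (simp add: suffix_code_iff_prefix_code_rev inj_image_subset_iff inj_image_eq_iff)
qed

lemma suffix_code_conc_iff: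
  assumes "X \<noteq> {}" "Y \<noteq> {}" "X \<subseteq> plus_words" "Y \<subseteq> plus_words"
  shows "suffix_code (conc X Y) \<and> suffix_code (conc Y X) \<longleftrightarrow> suffix_code X \<and> suffix_code Y"
proof -
  have "rev ` Y \<noteq> {}" "rev ` X \<noteq> {}" "rev ` Y \<subseteq> plus_words" "rev ` X \<subseteq> plus_words"
    using assms by (simp_all add: rev_image_subset_plus_words_iff)
  from prefix_code_conc_iff[OF this] show ?thesis
    by (simp add: suffix_code_iff_prefix_code_rev rev_image_conc conj_commute)
qed

lemma maximal_suffix_code_conc_iff:
  assumes "X \<noteq> {}" "Y \<noteq> {}" "X \<subseteq> plus_words" "Y \<subseteq> plus_words"
  shows "maximal_suffix_code (conc X Y) \<and> maximal_suffix_code (conc Y X)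
    \<longleftrightarrow> maximal_suffix_code X \<and> maximal_suffix_code Y"
proof -
  have "rev ` Y \<noteq> {}" "rev ` X \<noteq> {}" "rev ` Y \<subseteq> plus_words" "rev ` X \<subseteq> plus_words"
    using assms by (simp_all add: rev_image_subset_plus_words_iff)
  from maximal_prefix_code_conc_iff[OF this] show ?thesis
    by (simp add: maximal_suffix_code_iff_prefix_code_rev rev_image_conc conj_commute)
qed

lemma alt_induced_conc_if_suffix_codes:
  assumes "suffix_code X" "suffix_code Y" "X \<noteq> {}" "Y \<noteq> {}"
  shows "alt_induced (conc X Y)"
proof -
  have "alt_code (rev ` X) (rev ` Y)"
    using assms by (simp add: alt_code_if_prefix_codes flip: suffix_code_iff_prefix_code_rev)
  then show ?thesis unfolding alt_induced_def using alt_code_if_alt_code_rev by blast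
qed

lemma bifix_code_conc_iff:
  assumes "X \<noteq> {}" "Y \<noteq> {}" "X \<subseteq> plus_words" "Y \<subseteq> plus_words"
  shows "bifix_code (conc X Y) \<and> bifix_code (conc Y X) \<longleftrightarrow> bifix_code X \<and> bifix_code Y"
  using prefix_code_conc_iff[OF assms] suffix_code_conc_iff[OF assms]
  unfolding bifix_code_def by blast

lemma maximal_bifix_code_if_right_complete:
  assumes "bifix_code X" "right_complete X"
  shows "maximal_bifix_code X"
proof -
  have "maximal_prefix_code X"
    using assms maximal_prefix_code_iff_right_complete bifix_code_def by blast
  then show ?thesis
    using assms(1) unfolding maximal_bifix_code_def maximal_prefix_code_def bifix_code_def by blast
qed

lemma sublist_append_split:
  assumes "sublist (a @ b) (x @ y)"
  shows "sublist a x \<or> sublist b y"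
  using assms unfolding sublist_append
proof (elim disjE exE conjE)
  assume "sublist (a @ b) x"
  then show ?thesis using sublist_order.order_trans[OF sublist_append_rightI] by blast
next
  assume "sublist (a @ b) y"
  then show ?thesis using sublist_order.order_trans[OF sublist_append_leftI] by blast
next
  fix xs ys assume ab: "a @ b = xs @ ys" and "suffix xs x" "prefix ys y"
  then have x: "sublist xs x" and y: "sublist ys y"
    by (simp_all add: suffix_imp_sublist prefix_imp_sublist)
  from ab have "sublist a xs \<or> sublist b ys"
    by (auto simp: append_eq_append_conv2)
  then show ?thesis
    using sublist_order.order_trans[OF _ x, of a] sublist_order.order_trans[OF _ y, of b] by blast
qed

lemma thin_conc:
  assumes "thin X" "thin Y"
  shows "thin (conc X Y)"
proof -
  obtain w v where w: "\<forall>x\<in>X. \<not> sublist w x" and v: "\<forall>y\<in>Y. \<not> sublist v y"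
    using assms unfolding thin_def by blast
  have "\<not> sublist (w @ v) z" if z: "z \<in> conc X Y" for z
  proof -
    obtain x y where "x \<in> X" "y \<in> Y" "z = x @ y" using z unfolding mem_conc_iff by blast
    with w v sublist_append_split[of w v x y] show ?thesis by blast
  qed
  then show ?thesis unfolding thin_def by blast
qed

lemma thin_conc_left:
  assumes "thin (conc X Y)" "Y \<noteq> {}"
  shows "thin X"
proof -
  obtain w where w: "\<forall>z\<in>conc X Y. \<not> sublist w z" using assms(1) unfolding thin_def by blast
  obtain y where "y \<in> Y" using assms(2) by blast
  have "\<not> sublist w x" if "x \<in> X" for x
  proof
    assume "sublist w x"
    then have "sublist w (x @ y)" using sublist_order.order_trans[OF _ sublist_append_rightI] by blast
    moreover have "x @ y \<in> conc X Y" using \<open>x \<in> X\<close> \<open>y \<in> Y\<close> unfolding mem_conc_iff by blast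
    ultimately show False using w by blast
  qed
  then show ?thesis unfolding thin_def by blast
qed

subsection \<open>Thin maximal bifix codes are right complete\<close>

definition avoiding :: "'a list \<Rightarrow> nat \<Rightarrow> 'a list set" where
  "avoiding w n = {s. length s = n \<and> \<not> sublist w s}"

lemma finite_words_length: "finite {s :: 'a::finite list. length s = n}"
  using finite_lists_length_eq[of "UNIV :: 'a set" n] by simp

lemma card_words_length: "card {s :: 'a::finite list. length s = n} = CARD('a) ^ n"
  using card_lists_length_eq[of "UNIV :: 'a set" n] by simp

lemma card_words_with_prefix:
  assumes "length u \<le> n"
  shows "card {s :: 'a::finite list. length s = n \<and> prefix u s} = CARD('a) ^ (n - length u)"
proof -
  have "{s. length s = n \<and> prefix u s} = (\<lambda>r. u @ r) ` {r. length r = n - length u}"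
    using assms by (auto simp: prefix_def)
  moreover have "inj ((@) u)" by (simp add: inj_on_def)
  ultimately show ?thesis by (simp add: card_image inj_on_subset card_words_length)
qed

lemma finite_avoiding: "finite (avoiding (w :: 'a::finite list) n)"
  unfolding avoiding_def by (rule finite_subset[OF _ finite_words_length[of n]]) auto

lemma card_avoiding_le: "card (avoiding (w :: 'a::finite list) n) \<le> CARD('a) ^ n"
  unfolding avoiding_def card_words_length[symmetric]
  by (rule card_mono[OF finite_words_length]) auto

lemma card_avoiding_add:
  "card (avoiding (w :: 'a::finite list) (a + b)) \<le> card (avoiding w a) * card (avoiding w b)"
proof -
  have "avoiding w (a + b) \<subseteq> (\<lambda>(p, q). p @ q) ` (avoiding w a \<times> avoiding w b)"
  proof
    fix s assume s: "s \<in> avoiding w (a + b)"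
    have "\<not> sublist w (take a s)"
      using s sublist_order.order_trans[OF _ prefix_imp_sublist[OF take_is_prefix]]
      unfolding avoiding_def by blast
    moreover have "\<not> sublist w (drop a s)"
      using s sublist_order.order_trans[OF _ suffix_imp_sublist[OF suffix_drop]]
      unfolding avoiding_def by blast
    ultimately have "(take a s, drop a s) \<in> avoiding w a \<times> avoiding w b"
      using s unfolding avoiding_def by simp
    then show "s \<in> (\<lambda>(p, q). p @ q) ` (avoiding w a \<times> avoiding w b)"
      by (rule rev_image_eqI) simp
  qed
  then have "card (avoiding w (a + b)) \<le> card ((\<lambda>(p, q). p @ q) ` (avoiding w a \<times> avoiding w b))"
    by (simp add: card_mono finite_avoiding)
  also have "\<dots> \<le> card (avoiding w a \<times> avoiding w b)"
    by (rule card_image_le) (simp add: finite_avoiding)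
  finally show ?thesis by (simp add: card_cartesian_product)
qed

lemma card_avoiding_length: "card (avoiding (w :: 'a::finite list) (length w)) \<le> CARD('a) ^ length w - 1"
proof -
  have "avoiding w (length w) \<subseteq> {s. length s = length w} - {w}"
    unfolding avoiding_def by auto
  then have "card (avoiding w (length w)) \<le> card ({s. length s = length w} - {w})"
    by (rule card_mono[OF finite_Diff[OF finite_words_length]])
  also have "\<dots> = CARD('a) ^ length w - 1"
    by (simp add: card_words_length finite_words_length)
  finally show ?thesis .
qed

lemma card_avoiding_mult:
  "card (avoiding (w :: 'a::finite list) (q * length w)) \<le> (CARD('a) ^ length w - 1) ^ q"
proof (induction q)
  case 0
  have "avoiding w 0 \<subseteq> {[]}" unfolding avoiding_def by auto
  then show ?case using card_mono[of "{[]}" "avoiding w 0"] by simp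
next
  case (Suc q)
  have "card (avoiding w (length w + q * length w))
      \<le> card (avoiding w (length w)) * card (avoiding w (q * length w))"
    by (rule card_avoiding_add)
  also have "\<dots> \<le> (CARD('a) ^ length w - 1) * (CARD('a) ^ length w - 1) ^ q"
    using card_avoiding_length Suc.IH by (rule mult_le_mono)
  finally show ?case by simp
qed

lemma power_mult_add_le: "(a::nat) ^ q * (a + q) \<le> (a + 1) ^ q * a"
proof (induction q)
  case (Suc q)
  have "a ^ Suc q * (a + Suc q) = a ^ q * (a * (a + q + 1))" by (simp add: algebra_simps)
  also have "\<dots> \<le> a ^ q * ((a + 1) * (a + q))" by (simp add: algebra_simps)
  also have "\<dots> = (a + 1) * (a ^ q * (a + q))" by (simp add: algebra_simps)
  also have "\<dots> \<le> (a + 1) * ((a + 1) ^ q * a)" using Suc.IH by (rule mult_le_mono2)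
  also have "\<dots> = (a + 1) ^ Suc q * a" by (simp only: power_Suc mult.assoc)
  finally show ?case .
qed simp

lemma exists_power_gt:
  assumes "(K::nat) \<ge> 1"
  shows "\<exists>q. C * (K - 1) ^ q < K ^ q"
proof (cases "K = 1")
  case False
  define a where "a = K - 1"
  have "a \<ge> 1" and K: "K = a + 1" using assms False unfolding a_def by auto
  have "C * a ^ Suc (C * a) < a ^ (C * a) * (a + C * a)"
    using \<open>a \<ge> 1\<close> by (simp add: algebra_simps)
  also have "\<dots> \<le> (a + 1) ^ (C * a) * a" by (rule power_mult_add_le)
  finally have "C * a ^ (C * a) < (a + 1) ^ (C * a)"
    by (simp add: algebra_simps)
  then show ?thesis unfolding K by auto
qed (intro exI[of _ 1], simp)

lemma avoiding_sparse: "\<exists>n\<ge>r. card (avoiding (w :: 'a::finite list) n) < CARD('a) ^ (n - r)"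
proof -
  define k m where "k = CARD('a)" and "m = length w"
  have "k ^ m \<ge> 1" unfolding k_def by simp
  then obtain q where q: "k ^ r * (k ^ m - 1) ^ q < (k ^ m) ^ q"
    using exists_power_gt by blast
  have "card (avoiding w (q * m + r)) \<le> card (avoiding w (q * m)) * card (avoiding w r)"
    by (rule card_avoiding_add)
  also have "\<dots> \<le> (k ^ m - 1) ^ q * k ^ r"
    using card_avoiding_mult card_avoiding_le unfolding k_def m_def by (rule mult_le_mono)
  also have "\<dots> < k ^ (q * m)"
    using q by (simp add: power_mult mult.commute)
  finally show ?thesis unfolding k_def by (intro exI[of _ "q * m + r"]) simp
qed

lemma card_suffix_in_le_prefix_in:
  fixes X :: "'a::finite list set"
  assumes X: "prefix_code X"
  shows "card {s. length s = n \<and> (\<exists>x\<in>X. suffix x s)} \<le> card {s. length s = n \<and> (\<exists>x\<in>X. prefix x s)}"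
    (is "card ?S \<le> card ?P")
proof -
  define sel where "sel s = (SOME x. x \<in> X \<and> suffix x s)" for s
  have sel: "sel s \<in> X \<and> suffix (sel s) s" if "s \<in> ?S" for s
    unfolding sel_def by (rule someI_ex) (use that in blast)
  define rest where "rest s = take (length s - length (sel s)) s" for s
  have split: "s = rest s @ sel s" if "s \<in> ?S" for s
    using sel[OF that] unfolding rest_def by (blast intro: suffix_take)
  \<comment> \<open>Rotating the suffix in \<open>X\<close> to the front is injective because \<open>X\<close> is a prefix code.\<close>
  define rotate where "rotate s = sel s @ rest s" for s
  have "inj_on rotate ?S"
  proof (rule inj_onI)
    fix s t assume s: "s \<in> ?S" and t: "t \<in> ?S" and eq: "rotate s = rotate t"
    have "prefix (sel s) (rotate s)" unfolding rotate_def by simp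
    then have "prefix (sel s) (rotate t)" by (simp only: eq)
    moreover have "prefix (sel t) (rotate t)" unfolding rotate_def by simp
    ultimately have "prefix (sel s) (sel t) \<or> prefix (sel t) (sel s)" by (rule prefix_same_cases)
    then have sel_eq: "sel s = sel t" using prefix_code_eq[OF X] sel[OF s] sel[OF t] by blast
    with eq have rest_eq: "rest s = rest t" unfolding rotate_def by simp
    have "s = rest s @ sel s" using s by (rule split)
    also have "\<dots> = rest t @ sel t" by (simp only: sel_eq rest_eq)
    also have "\<dots> = t" using t by (rule split[symmetric])
    finally show "s = t" .
  qed
  moreover have "rotate ` ?S \<subseteq> ?P"
  proof
    fix r assume "r \<in> rotate ` ?S"
    then obtain s where s: "s \<in> ?S" "r = rotate s" by blast
    have "length r = length (rest s @ sel s)" unfolding s(2) rotate_def by simp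
    also have "\<dots> = length s" using arg_cong[OF split[OF s(1)], of length] by (rule sym)
    moreover have "prefix (sel s) r" unfolding s(2) rotate_def by simp
    ultimately show "r \<in> ?P" using s(1) sel[OF s(1)] by auto
  qed
  moreover have "finite ?P" by (rule finite_subset[OF _ finite_words_length[of n]]) auto
  ultimately show ?thesis by (rule card_inj_on_le)
qed

lemma suffix_code_insert:
  assumes "suffix_code X" "y \<noteq> []" "\<forall>x\<in>X. \<not> suffix x y \<and> \<not> suffix y x"
  shows "suffix_code (insert y X)"
  using assms unfolding suffix_code_def plus_words_def strict_suffix_def by auto

lemma maximal_bifix_code_nonempty: "maximal_bifix_code X \<Longrightarrow> X \<noteq> {}"
  using prefix_code_insert[of "{}" "[undefined]"] suffix_code_insert[of "{}" "[undefined]"]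
  unfolding maximal_bifix_code_def bifix_code_def prefix_code_def suffix_code_def by auto

text \<open>If \<open>u\<close> witnesses that \<open>X\<close> is not right complete and \<open>w\<close> that it is thin, then
  \<open>X \<union> {u w t}\<close> would be bifix unless some word of \<open>X\<close> is a suffix of \<open>u w t\<close>, hence of \<open>w t\<close>.\<close>

lemma maximal_bifix_code_suffix_in_code:
  assumes X: "maximal_bifix_code X"
    and w: "\<forall>x\<in>X. \<not> sublist w x"
    and u: "\<forall>x\<in>X. \<not> prefix x u \<and> \<not> prefix u x"
    and "sublist w s"
  shows "\<exists>x\<in>X. suffix x s"
proof -
  obtain p t where s: "s = p @ w @ t" using \<open>sublist w s\<close> unfolding sublist_def by blast
  have "X \<noteq> {}" using X by (rule maximal_bifix_code_nonempty)
  then have "u \<noteq> []" using u by auto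
  define y where "y = u @ w @ t"
  have "\<exists>x\<in>X. suffix x y"
  proof (rule ccontr)
    assume no_suffix: "\<not> (\<exists>x\<in>X. suffix x y)"
    have "\<forall>x\<in>X. \<not> prefix x y \<and> \<not> prefix y x"
      using u comparable_prefix_cases[of _ y u] prefix_order.trans[of u y] unfolding y_def by auto
    moreover have "\<forall>x\<in>X. \<not> suffix y x"
      using w sublist_order.order_trans[OF _ suffix_imp_sublist] unfolding y_def by blast
    moreover have "y \<noteq> []" using \<open>u \<noteq> []\<close> unfolding y_def by simp
    ultimately have "bifix_code (insert y X)"
      using X no_suffix prefix_code_insert[of X y] suffix_code_insert[of X y]
      unfolding maximal_bifix_code_def bifix_code_def by blast
    then have "y \<in> X" using X unfolding maximal_bifix_code_def by blast
    with no_suffix show False by blast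
  qed
  then obtain x where "x \<in> X" "suffix x (u @ (w @ t))" unfolding y_def by auto
  moreover have "\<not> sublist w x" using w \<open>x \<in> X\<close> by blast
  ultimately have "x \<in> X" "suffix x (w @ t)" by (auto simp: suffix_append)
  then show ?thesis unfolding s using suffix_appendI by blast
qed

lemma right_complete_if_thin_maximal_bifix_code:
  fixes X :: "'a::finite list set"
  assumes "thin X" "maximal_bifix_code X"
  shows "right_complete X"
proof (rule ccontr)
  assume "\<not> right_complete X"
  then obtain u where u: "\<forall>x\<in>X. \<not> prefix x u \<and> \<not> prefix u x"
    unfolding right_complete_def by blast
  obtain w where w: "\<forall>x\<in>X. \<not> sublist w x" using assms(1) unfolding thin_def by blast
  obtain n where n: "length u \<le> n" "card (avoiding w n) < CARD('a) ^ (n - length u)"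
    using avoiding_sparse by blast
  define W S P U where
    "W = {s :: 'a list. length s = n}" and
    "S = {s. length s = n \<and> (\<exists>x\<in>X. suffix x s)}" and
    "P = {s. length s = n \<and> (\<exists>x\<in>X. prefix x s)}" and
    "U = {s. length s = n \<and> prefix u s}"
  have fin: "finite A" if "A \<subseteq> W" for A
    using finite_subset[OF that] finite_words_length unfolding W_def by blast
  have "W \<subseteq> S \<union> avoiding w n"
    using maximal_bifix_code_suffix_in_code[OF assms(2) w u]
    unfolding W_def S_def avoiding_def by blast
  then have "card W \<le> card (S \<union> avoiding w n)"
    using fin[of S] finite_avoiding unfolding S_def W_def by (intro card_mono) auto
  also have "\<dots> \<le> card S + card (avoiding w n)" by (rule card_Un_le)
  finally have "card W \<le> card S + card (avoiding w n)" .
  moreover have "card S \<le> card P"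
    unfolding S_def P_def using assms(2) card_suffix_in_le_prefix_in
    unfolding maximal_bifix_code_def bifix_code_def by blast
  moreover have "P \<inter> U = {}"
    using u comparable_prefix_cases unfolding P_def U_def by blast
  then have "card P + card U \<le> card W"
    using card_Un_disjoint[of P U] card_mono[of W "P \<union> U"] fin[of P] fin[of U] fin[of W]
    unfolding P_def U_def W_def by auto
  moreover have "card U = CARD('a) ^ (n - length u)"
    unfolding U_def using card_words_with_prefix[OF n(1)] .
  ultimately show False using n(2) by linarith
qed

lemma thin_maximal_bifix_code_conc_iff:
  fixes X Y :: "'a::finite list set"
  assumes "X \<noteq> {}" "Y \<noteq> {}" "X \<subseteq> plus_words" "Y \<subseteq> plus_words"
  shows "thin (conc X Y) \<and> maximal_bifix_code (conc X Y) \<and> thin (conc Y X) \<and> maximal_bifix_code (conc Y X)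
    \<longleftrightarrow> thin X \<and> maximal_bifix_code X \<and> thin Y \<and> maximal_bifix_code Y"
proof
  assume XY: "thin (conc X Y) \<and> maximal_bifix_code (conc X Y) \<and>
    thin (conc Y X) \<and> maximal_bifix_code (conc Y X)"
  then have "bifix_code X" "bifix_code Y"
    using bifix_code_conc_iff[OF assms] unfolding maximal_bifix_code_def by blast+
  moreover have "right_complete X" "right_complete Y"
    using XY right_complete_if_thin_maximal_bifix_code right_complete_conc_left by blast+
  moreover have "thin X" "thin Y"
    using XY thin_conc_left assms(1,2) by blast+
  ultimately show "thin X \<and> maximal_bifix_code X \<and> thin Y \<and> maximal_bifix_code Y"
    using maximal_bifix_code_if_right_complete by blast
next
  assume XY: "thin X \<and> maximal_bifix_code X \<and> thin Y \<and> maximal_bifix_code Y"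
  then have "bifix_code (conc X Y)" "bifix_code (conc Y X)"
    using bifix_code_conc_iff[OF assms] unfolding maximal_bifix_code_def by blast+
  moreover have "right_complete (conc X Y)" "right_complete (conc Y X)"
    using XY right_complete_if_thin_maximal_bifix_code right_complete_conc by blast+
  moreover have "thin (conc X Y)" "thin (conc Y X)"
    using XY thin_conc by blast+
  ultimately show "thin (conc X Y) \<and> maximal_bifix_code (conc X Y) \<and>
    thin (conc Y X) \<and> maximal_bifix_code (conc Y X)"
    using maximal_bifix_code_if_right_complete by blast
qed

theorem theoremT:
  fixes X Y :: "('a::finite) list set"
  assumes "X \<noteq> {}" and "Y \<noteq> {}" and "X \<subseteq> plus_words" and "Y \<subseteq> plus_words"
  shows
   "((alt_induced (conc X Y) \<and> prefix_code (conc X Y) \<and>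
      alt_induced (conc Y X) \<and> prefix_code (conc Y X))
       \<longleftrightarrow> prefix_code X \<and> prefix_code Y) \<and>
    ((alt_induced (conc X Y) \<and> maximal_prefix_code (conc X Y) \<and>
      alt_induced (conc Y X) \<and> maximal_prefix_code (conc Y X))
       \<longleftrightarrow> maximal_prefix_code X \<and> maximal_prefix_code Y) \<and>
    ((alt_induced (conc X Y) \<and> suffix_code (conc X Y) \<and>
      alt_induced (conc Y X) \<and> suffix_code (conc Y X))
       \<longleftrightarrow> suffix_code X \<and> suffix_code Y) \<and>
    ((alt_induced (conc X Y) \<and> maximal_suffix_code (conc X Y) \<and>
      alt_induced (conc Y X) \<and> maximal_suffix_code (conc Y X))
       \<longleftrightarrow> maximal_suffix_code X \<and> maximal_suffix_code Y) \<and>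
    ((alt_induced (conc X Y) \<and> bifix_code (conc X Y) \<and>
      alt_induced (conc Y X) \<and> bifix_code (conc Y X))
       \<longleftrightarrow> bifix_code X \<and> bifix_code Y) \<and>
    ((alt_induced (conc X Y) \<and> thin (conc X Y) \<and> maximal_bifix_code (conc X Y) \<and>
      alt_induced (conc Y X) \<and> thin (conc Y X) \<and> maximal_bifix_code (conc Y X))
       \<longleftrightarrow> thin X \<and> maximal_bifix_code X \<and> thin Y \<and> maximal_bifix_code Y)"
proof -
  have combine: "alt_induced (conc X Y) \<and> P (conc X Y) \<and> alt_induced (conc Y X) \<and> P (conc Y X)
      \<longleftrightarrow> P X \<and> P Y"
    if "P (conc X Y) \<and> P (conc Y X) \<longleftrightarrow> P X \<and> P Y"
      and "P X \<and> P Y \<Longrightarrow> alt_induced (conc X Y) \<and> alt_induced (conc Y X)"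
    for P :: "'a list set \<Rightarrow> bool"
    using that by blast
  have prefix: "prefix_code X \<and> prefix_code Y \<Longrightarrow> alt_induced (conc X Y) \<and> alt_induced (conc Y X)"
    using alt_induced_conc_if_prefix_codes[of X Y] alt_induced_conc_if_prefix_codes[of Y X] assms(1,2)
    by blast
  have suffix: "suffix_code X \<and> suffix_code Y \<Longrightarrow> alt_induced (conc X Y) \<and> alt_induced (conc Y X)"
    using alt_induced_conc_if_suffix_codes[of X Y] alt_induced_conc_if_suffix_codes[of Y X] assms(1,2)
    by blast
  have thin_bifix: "alt_induced (conc X Y) \<and> thin (conc X Y) \<and> maximal_bifix_code (conc X Y) \<and>
      alt_induced (conc Y X) \<and> thin (conc Y X) \<and> maximal_bifix_code (conc Y X)
    \<longleftrightarrow> thin X \<and> maximal_bifix_code X \<and> thin Y \<and> maximal_bifix_code Y"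
  proof -
    have "maximal_bifix_code Z \<Longrightarrow> prefix_code Z" for Z :: "'a list set"
      unfolding maximal_bifix_code_def bifix_code_def by simp
    then show ?thesis using thin_maximal_bifix_code_conc_iff[OF assms] prefix by blast
  qed
  show ?thesis
    by (intro conjI thin_bifix
        combine[OF prefix_code_conc_iff[OF assms] prefix]
        combine[OF maximal_prefix_code_conc_iff[OF assms]]
        combine[OF suffix_code_conc_iff[OF assms] suffix]
        combine[OF maximal_suffix_code_conc_iff[OF assms]]
        combine[OF bifix_code_conc_iff[OF assms]])
      (use prefix suffix in \<open>auto simp: maximal_prefix_code_def maximal_suffix_code_def bifix_code_def\<close>)
qed

end
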